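(* Let $(X,\to,d_A)$ be a finitely branching metric transition system over $A$. Then $\mathit{lo}_S$ is $c_S$-compatible, i.e. $\mathit{lo}_S(c_S(\mathcal F))\subseteq c_S(\mathit{lo}_S(\mathcal F))$ for every $\mathcal F\subseteq[0,1]^X$.
   Context: A metric transition system: $(X,\to,d_A)$ with $\to\subseteq X\times A\times X$ and a metric $d_A\colon A\times A\to[0,1]$; finitely branching: each $\{(a,x')\mid x\xrightarrow{a}x'\}$ is finite. $r\oplus s=\min\{r+s,1\}$, $r\ominus s=\max\{0,r-s\}$. $\bigcirc_cf(x)=\bigvee\{(1-d_A(b,c))\land f(x')\mid x\xrightarrow{b}x'\}$ (empty join $=0$). $\mathit{lo}_S(\mathcal F)=\bigcup_{c\in A}\{\bigcirc_cf\mid f\in\mathrm{cl}^{\land,\mathrm{sh}}_f(\mathcal F)\}$, where $\mathrm{cl}^{\land,\mathrm{sh}}_f$ closes under finite pointwise meets (empty meet = constant 1) and constant shifts $f\mapsto f\ominus r$, $f\mapsto f\oplus r$, $r\in[0,1]$. $\alpha_S(\mathcal F)(x_1,x_2)=\bigvee_{f\in\mathcal F}(f(x_1)\ominus f(x_2))$, $\gamma_S(d)=\{f\mid\forall x_1,x_2\colon f(x_1)\ominus f(x_2)\le d(x_1,x_2)\}$ for directed pseudo-metrics $d$ on $X$, $c_S=\gamma_S\circ\alpha_S$. *)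

theory Defs
  imports Complex_Main
begin

definition tplus :: "real \<Rightarrow> real \<Rightarrow> real" where
  "tplus r s = min (r + s) 1"
definition tminus :: "real \<Rightarrow> real \<Rightarrow> real" where
  "tminus r s = max 0 (r - s)"

definition join01 :: "real set \<Rightarrow> real" where
  "join01 S = (if S = {} then 0 else Sup S)"

definition label_metric :: "('a \<Rightarrow> 'a \<Rightarrow> real) \<Rightarrow> bool" where
  "label_metric d \<longleftrightarrow>
     (\<forall>a b. 0 \<le> d a b \<and> d a b \<le> 1) \<and>
     (\<forall>a b. d a b = 0 \<longleftrightarrow> a = b) \<and>
     (\<forall>a b. d a b = d b a) \<and>
     (\<forall>a b c. d a c \<le> d a b + d b c)"

definition fin_branching :: "('x \<times> 'a \<times> 'x) set \<Rightarrow> bool" where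
  "fin_branching T \<longleftrightarrow> (\<forall>x. finite {(a, x'). (x, a, x') \<in> T})"

definition unit_fun :: "('x \<Rightarrow> real) \<Rightarrow> bool" where
  "unit_fun f \<longleftrightarrow> (\<forall>x. 0 \<le> f x \<and> f x \<le> 1)"

definition next_op :: "('x \<times> 'a \<times> 'x) set \<Rightarrow> ('a \<Rightarrow> 'a \<Rightarrow> real) \<Rightarrow> 'a \<Rightarrow> ('x \<Rightarrow> real) \<Rightarrow> 'x \<Rightarrow> real" where
  "next_op T d c f x = join01 {min (1 - d b c) (f x') | b x'. (x, b, x') \<in> T}"

text \<open>Closure under finite pointwise meets (empty meet = constant 1) and constant shifts.\<close>
inductive_set clos_meet_shift :: "('x \<Rightarrow> real) set \<Rightarrow> ('x \<Rightarrow> real) set" for F where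
  base: "f \<in> F \<Longrightarrow> f \<in> clos_meet_shift F"
| top: "(\<lambda>_. 1) \<in> clos_meet_shift F"
| meet: "f \<in> clos_meet_shift F \<Longrightarrow> g \<in> clos_meet_shift F \<Longrightarrow> (\<lambda>x. min (f x) (g x)) \<in> clos_meet_shift F"
| shift_down: "f \<in> clos_meet_shift F \<Longrightarrow> 0 \<le> r \<Longrightarrow> r \<le> 1 \<Longrightarrow> (\<lambda>x. tminus (f x) r) \<in> clos_meet_shift F"
| shift_up: "f \<in> clos_meet_shift F \<Longrightarrow> 0 \<le> r \<Longrightarrow> r \<le> 1 \<Longrightarrow> (\<lambda>x. tplus (f x) r) \<in> clos_meet_shift F"

definition lo_S :: "('x \<times> 'a \<times> 'x) set \<Rightarrow> ('a \<Rightarrow> 'a \<Rightarrow> real) \<Rightarrow> ('x \<Rightarrow> real) set \<Rightarrow> ('x \<Rightarrow> real) set" where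
  "lo_S T d F = (\<Union>c. {next_op T d c f | f. f \<in> clos_meet_shift F})"

definition alpha_S :: "('x \<Rightarrow> real) set \<Rightarrow> 'x \<Rightarrow> 'x \<Rightarrow> real" where
  "alpha_S F x1 x2 = join01 {tminus (f x1) (f x2) | f. f \<in> F}"

definition gamma_S :: "('x \<Rightarrow> 'x \<Rightarrow> real) \<Rightarrow> ('x \<Rightarrow> real) set" where
  "gamma_S d = {f. unit_fun f \<and> (\<forall>x1 x2. tminus (f x1) (f x2) \<le> d x1 x2)}"

definition c_S :: "('x \<Rightarrow> real) set \<Rightarrow> ('x \<Rightarrow> real) set" where
  "c_S F = gamma_S (alpha_S F)"

end

theory Submission imports Defs begin

text \<open>
  The closure of \<open>c_S F\<close> under meets and shifts is \<open>c_S F\<close> itself, so it suffices to show that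
  \<open>g = \<bigcirc>\<^sub>c f\<close> is non-expansive for \<open>\<alpha>\<^sub>S(lo\<^sub>S F)\<close> whenever \<open>f \<in> c_S F\<close>.
  Suppose \<open>g x\<^sub>1 - g x\<^sub>2 = \<epsilon>\<close> and let \<open>\<delta> > 0\<close>. Finite branching gives a successor \<open>y\<^sub>1\<close> of \<open>x\<^sub>1\<close>
  realising \<open>g x\<^sub>1\<close>; every successor \<open>y\<close> of \<open>x\<^sub>2\<close> with \<open>f y \<le> g x\<^sub>2\<close> then satisfies
  \<open>f y\<^sub>1 - f y \<ge> \<epsilon>\<close>, hence some \<open>k \<in> F\<close> separates \<open>y\<^sub>1\<close> from \<open>y\<close> by more than \<open>\<epsilon> - \<delta>\<close>.
  Shifting each such \<open>k\<close> to the value \<open>g x\<^sub>1\<close> at \<open>y\<^sub>1\<close> and taking the finite meet yields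
  \<open>h \<in> cl(F)\<close> with \<open>\<bigcirc>\<^sub>c h x\<^sub>1 \<ge> g x\<^sub>1\<close> and \<open>\<bigcirc>\<^sub>c h x\<^sub>2 \<le> g x\<^sub>2 + \<delta>\<close>.
\<close>

lemma join01_upper: "bdd_above S \<Longrightarrow> s \<in> S \<Longrightarrow> s \<le> join01 S"
  unfolding join01_def by (auto intro: cSup_upper)

lemma join01_least: "(\<And>s. s \<in> S \<Longrightarrow> s \<le> u) \<Longrightarrow> 0 \<le> u \<Longrightarrow> join01 S \<le> u"
  unfolding join01_def by (auto intro: cSup_least)

lemma join01_nonneg:
  assumes "\<And>s. s \<in> S \<Longrightarrow> 0 \<le> s \<and> s \<le> 1"
  shows "0 \<le> join01 S"
proof (cases "S = {}")
  case False
  then obtain s where "s \<in> S" by blast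
  with assms have "0 \<le> s" and "s \<le> join01 S"
    by (auto intro!: join01_upper bdd_aboveI[of _ 1])
  then show ?thesis by linarith
qed (simp add: join01_def)

lemma less_join01D: "0 \<le> t \<Longrightarrow> t < join01 S \<Longrightarrow> \<exists>s\<in>S. t < s"
  unfolding join01_def by (auto split: if_splits intro: less_cSupD)

lemma join01_in_finite: "finite S \<Longrightarrow> 0 < join01 S \<Longrightarrow> join01 S \<in> S"
  unfolding join01_def by (auto split: if_splits simp: cSup_eq_Max)

lemma tminus_nonneg: "0 \<le> tminus r s"
  by (simp add: tminus_def)

lemma tminus_min_le: "tminus (min a b) (min a' b') \<le> max (tminus a a') (tminus b b')"
  by (simp add: tminus_def min_def max_def)

lemma tminus_shift_down_le: "tminus (tminus a r) (tminus b r) \<le> tminus a b"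
  by (simp add: tminus_def max_def)

lemma tminus_shift_up_le: "tminus (tplus a r) (tplus b r) \<le> tminus a b"
  by (simp add: tminus_def tplus_def min_def max_def)

lemma unit_fun_min: "unit_fun f \<Longrightarrow> unit_fun g \<Longrightarrow> unit_fun (\<lambda>x. min (f x) (g x))"
  unfolding unit_fun_def by (simp add: min_def)

lemma unit_fun_shift_down: "unit_fun f \<Longrightarrow> 0 \<le> r \<Longrightarrow> unit_fun (\<lambda>x. tminus (f x) r)"
  unfolding unit_fun_def tminus_def by (smt (verit))

lemma unit_fun_shift_up: "unit_fun f \<Longrightarrow> 0 \<le> r \<Longrightarrow> unit_fun (\<lambda>x. tplus (f x) r)"
  unfolding unit_fun_def tplus_def by (simp add: min_def)

lemma unit_fun_clos_meet_shift:
  assumes "\<forall>f\<in>F. unit_fun f" "f \<in> clos_meet_shift F"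
  shows "unit_fun f"
  using assms(2)
  by induction
    (simp_all add: assms(1) unit_fun_min unit_fun_shift_down unit_fun_shift_up, simp add: unit_fun_def)

lemma next_op_unit:
  assumes "label_metric d" "unit_fun h"
  shows "unit_fun (next_op T d c h)"
  unfolding unit_fun_def next_op_def
proof
  fix x
  let ?S = "{min (1 - d b c) (h x') | b x'. (x, b, x') \<in> T}"
  have bounds: "0 \<le> s \<and> s \<le> 1" if "s \<in> ?S" for s
  proof -
    from that obtain b y where "s = min (1 - d b c) (h y)" by blast
    moreover have "0 \<le> d b c" "d b c \<le> 1" using assms(1) by (simp_all add: label_metric_def)
    moreover have "0 \<le> h y" "h y \<le> 1" using assms(2) unfolding unit_fun_def by auto
    ultimately show ?thesis by simp
  qed
  have "0 \<le> join01 ?S" by (rule join01_nonneg) (rule bounds)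
  moreover have "join01 ?S \<le> 1" by (rule join01_least) (use bounds in auto)
  ultimately show "0 \<le> join01 ?S \<and> join01 ?S \<le> 1" ..
qed

lemma unit_fun_lo_S:
  assumes "label_metric d" "\<forall>f\<in>F. unit_fun f"
  shows "\<forall>n\<in>lo_S T d F. unit_fun n"
  using unit_fun_clos_meet_shift[OF assms(2)] next_op_unit[OF assms(1)] unfolding lo_S_def by blast

lemma finite_successor_values:
  assumes "fin_branching T"
  shows "finite {min (1 - d b c) (h x') | b x'. (x, b, x') \<in> T}"
proof -
  have "{min (1 - d b c) (h x') | b x'. (x, b, x') \<in> T}
        = (\<lambda>(b, x'). min (1 - d b c) (h x')) ` {(b, x'). (x, b, x') \<in> T}" by auto
  then show ?thesis using assms unfolding fin_branching_def by simp
qed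

lemma next_op_ge:
  assumes "fin_branching T" "(x, b, y) \<in> T"
  shows "min (1 - d b c) (h y) \<le> next_op T d c h x"
  unfolding next_op_def
  by (rule join01_upper[OF bdd_above_finite[OF finite_successor_values[OF assms(1)]]])
     (use assms(2) in blast)

lemma next_op_le:
  assumes "0 \<le> u" "\<And>b y. (x, b, y) \<in> T \<Longrightarrow> min (1 - d b c) (h y) \<le> u"
  shows "next_op T d c h x \<le> u"
  unfolding next_op_def by (rule join01_least) (use assms in auto)

lemma next_op_attained:
  assumes "fin_branching T" "0 < next_op T d c h x"
  obtains b y where "(x, b, y) \<in> T" "next_op T d c h x = min (1 - d b c) (h y)"
proof -
  have "next_op T d c h x \<in> {min (1 - d b c) (h y) | b y. (x, b, y) \<in> T}"
    using join01_in_finite[OF finite_successor_values[OF assms(1)]] assms(2)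
    unfolding next_op_def .
  then show ?thesis using that by blast
qed

lemma unit_fun_tminus_le: "unit_fun f \<Longrightarrow> tminus (f x) (f y) \<le> 1"
  unfolding unit_fun_def tminus_def by (smt (verit))

lemma alpha_S_upper:
  assumes "\<forall>f\<in>G. unit_fun f" "f \<in> G"
  shows "tminus (f x) (f y) \<le> alpha_S G x y"
proof -
  have "{tminus (f x) (f y) | f. f \<in> G} \<subseteq> {..1}"
    using assms(1) unit_fun_tminus_le by fastforce
  then show ?thesis
    unfolding alpha_S_def by (rule join01_upper[OF bdd_above_Iic[THEN bdd_above_mono]]) (use assms(2) in blast)
qed

lemma alpha_S_nonneg: "\<forall>f\<in>G. unit_fun f \<Longrightarrow> 0 \<le> alpha_S G x y"
  unfolding alpha_S_def by (rule join01_nonneg) (auto simp: unit_fun_tminus_le tminus_nonneg)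

lemma less_alpha_SD: "0 \<le> t \<Longrightarrow> t < alpha_S G x y \<Longrightarrow> \<exists>k\<in>G. t < tminus (k x) (k y)"
  unfolding alpha_S_def by (auto dest: less_join01D)

lemma clos_meet_shift_gamma_S:
  assumes "\<And>x y. 0 \<le> \<rho> x y" "f \<in> clos_meet_shift (gamma_S \<rho>)"
  shows "f \<in> gamma_S \<rho>"
  using assms(2)
proof induction
  case top
  show ?case using assms(1) by (simp add: gamma_S_def unit_fun_def tminus_def)
next
  case (meet f g)
  have "tminus (min (f x) (g x)) (min (f y) (g y)) \<le> \<rho> x y" for x y
    using tminus_min_le[of "f x" "g x" "f y" "g y"] meet.IH
    by (simp add: gamma_S_def) (meson max.bounded_iff order_trans)
  with meet.IH show ?case by (simp add: gamma_S_def unit_fun_min)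
next
  case (shift_down f r)
  have "tminus (tminus (f x) r) (tminus (f y) r) \<le> \<rho> x y" for x y
    using tminus_shift_down_le[of "f x" r "f y"] shift_down.IH
    by (simp add: gamma_S_def) (meson order_trans)
  with shift_down show ?case by (simp add: gamma_S_def unit_fun_shift_down)
next
  case (shift_up f r)
  have "tminus (tplus (f x) r) (tplus (f y) r) \<le> \<rho> x y" for x y
    using tminus_shift_up_le[of "f x" r "f y"] shift_up.IH
    by (simp add: gamma_S_def) (meson order_trans)
  with shift_up show ?case by (simp add: gamma_S_def unit_fun_shift_up)
qed simp

lemma clos_meet_shift_c_S:
  assumes "\<forall>f\<in>F. unit_fun f"
  shows "clos_meet_shift (c_S F) \<subseteq> c_S F"
  unfolding c_S_def using clos_meet_shift_gamma_S[of "alpha_S F", OF alpha_S_nonneg[OF assms]] by blast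

lemma clos_meet_shift_shift_to:
  assumes "k \<in> clos_meet_shift F" "unit_fun k" "0 \<le> v" "v \<le> 1"
  obtains h where "h \<in> clos_meet_shift F" "h z = v" "\<And>x. h x \<le> tminus v (k z - k x)"
proof (cases "v \<le> k z")
  case True
  have "k z \<le> 1" using assms(2) by (simp add: unit_fun_def)
  with True assms have "(\<lambda>x. tminus (k x) (k z - v)) \<in> clos_meet_shift F"
    by (intro clos_meet_shift.shift_down) auto
  with True assms(3) that show ?thesis by (simp add: tminus_def)
next
  case False
  have "0 \<le> k z" using assms(2) by (simp add: unit_fun_def)
  with False assms have "(\<lambda>x. tplus (k x) (v - k z)) \<in> clos_meet_shift F"
    by (intro clos_meet_shift.shift_up) auto
  with False assms that show ?thesis by (simp add: tplus_def tminus_def)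
qed

lemma clos_meet_shift_separating:
  assumes "finite Y" "\<forall>f\<in>F. unit_fun f" "0 \<le> v" "v \<le> 1"
    and "\<forall>y\<in>Y. \<exists>k\<in>F. t \<le> k z - k y"
  shows "\<exists>h\<in>clos_meet_shift F. v \<le> h z \<and> (\<forall>y\<in>Y. h y \<le> tminus v t)"
  using assms(1,5)
proof (induction Y rule: finite_induct)
  case empty
  show ?case using assms(4) by (intro bexI[of _ "\<lambda>_. 1"]) (auto intro: clos_meet_shift.top)
next
  case (insert y Y)
  then obtain h where h: "h \<in> clos_meet_shift F" "v \<le> h z" "\<forall>y\<in>Y. h y \<le> tminus v t"
    by auto
  from insert.prems obtain k where k: "k \<in> F" "t \<le> k z - k y" by auto
  obtain h' where h': "h' \<in> clos_meet_shift F" "h' z = v" "\<And>x. h' x \<le> tminus v (k z - k x)"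
    using clos_meet_shift_shift_to[OF clos_meet_shift.base[OF k(1)]] k(1) assms(2-4) by blast
  have "h' y \<le> tminus v t"
    using h'(3)[of y] k(2) by (simp add: tminus_def)
  with h h' show ?case
    by (intro bexI[of _ "\<lambda>x. min (h' x) (h x)"]) (auto intro: clos_meet_shift.meet)
qed

lemma lo_S_separates_next_op:
  assumes d: "label_metric d" and T: "fin_branching T" and F: "\<forall>f\<in>F. unit_fun f"
    and f: "f \<in> c_S F" and "0 < t" and t: "t < next_op T d c f x\<^sub>1 - next_op T d c f x\<^sub>2"
  shows "\<exists>n\<in>lo_S T d F. t \<le> n x\<^sub>1 - n x\<^sub>2"
proof -
  let ?g = "next_op T d c f"
  have f_unit: "unit_fun f" and f_alpha: "\<And>y y'. tminus (f y) (f y') \<le> alpha_S F y y'"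
    using f unfolding c_S_def gamma_S_def by auto
  have g_bounds: "0 \<le> ?g x\<^sub>2" "?g x\<^sub>1 \<le> 1"
    using next_op_unit[OF d f_unit] by (auto simp: unit_fun_def)
  have "0 < ?g x\<^sub>1" using g_bounds(1) \<open>0 < t\<close> t by linarith
  then obtain b\<^sub>1 y\<^sub>1 where y\<^sub>1: "(x\<^sub>1, b\<^sub>1, y\<^sub>1) \<in> T" "?g x\<^sub>1 = min (1 - d b\<^sub>1 c) (f y\<^sub>1)"
    using next_op_attained[OF T] by blast
  define Y where "Y = {y. \<exists>b. (x\<^sub>2, b, y) \<in> T \<and> f y \<le> ?g x\<^sub>2}"
  have "Y \<subseteq> snd ` {(b, y). (x\<^sub>2, b, y) \<in> T}" unfolding Y_def by force
  then have "finite Y" using T unfolding fin_branching_def by (meson finite_imageI finite_subset)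
  have separated: "\<forall>y\<in>Y. \<exists>k\<in>F. t \<le> k y\<^sub>1 - k y"
  proof
    fix y assume "y \<in> Y"
    then have "f y \<le> ?g x\<^sub>2" unfolding Y_def by blast
    moreover have "?g x\<^sub>1 \<le> f y\<^sub>1" using y\<^sub>1(2) by simp
    ultimately have "t < tminus (f y\<^sub>1) (f y)" using t unfolding tminus_def by linarith
    then have "t < alpha_S F y\<^sub>1 y" using f_alpha by (rule order.strict_trans2)
    then obtain k where "k \<in> F" "t < tminus (k y\<^sub>1) (k y)"
      using less_alpha_SD \<open>0 < t\<close> by (meson less_imp_le)
    then show "\<exists>k\<in>F. t \<le> k y\<^sub>1 - k y"
      using \<open>0 < t\<close> by (auto simp: tminus_def intro!: bexI[of _ k])
  qed
  obtain h where h: "h \<in> clos_meet_shift F" "?g x\<^sub>1 \<le> h y\<^sub>1" "\<forall>y\<in>Y. h y \<le> tminus (?g x\<^sub>1) t"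
    using clos_meet_shift_separating[OF \<open>finite Y\<close> F less_imp_le[OF \<open>0 < ?g x\<^sub>1\<close>] g_bounds(2) separated]
    by blast
  let ?n = "next_op T d c h"
  have "?g x\<^sub>1 \<le> ?n x\<^sub>1"
    using next_op_ge[OF T y\<^sub>1(1), of d c h] y\<^sub>1(2) h(2) by linarith
  moreover have "?n x\<^sub>2 \<le> ?g x\<^sub>1 - t"
  proof (rule next_op_le)
    fix b y assume succ: "(x\<^sub>2, b, y) \<in> T"
    have "min (1 - d b c) (f y) \<le> ?g x\<^sub>2" by (rule next_op_ge[OF T succ])
    then consider "1 - d b c \<le> ?g x\<^sub>2" | "y \<in> Y"
      using succ unfolding Y_def min_le_iff_disj by blast
    then show "min (1 - d b c) (h y) \<le> ?g x\<^sub>1 - t"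
    proof cases
      case 2
      then have "h y \<le> tminus (?g x\<^sub>1) t" using h(3) by blast
      then show ?thesis using g_bounds(1) t by (simp add: tminus_def)
    qed (use t in auto)
  qed (use g_bounds(1) t in simp)
  moreover have "?n \<in> lo_S T d F" using h(1) by (auto simp: lo_S_def)
  ultimately show ?thesis by (intro bexI[of _ ?n]) auto
qed

lemma next_op_c_S_diff_le:
  assumes d: "label_metric d" and T: "fin_branching T" and F: "\<forall>f\<in>F. unit_fun f"
    and f: "f \<in> c_S F" and "0 < \<delta>"
  shows "tminus (next_op T d c f x\<^sub>1) (next_op T d c f x\<^sub>2) \<le> alpha_S (lo_S T d F) x\<^sub>1 x\<^sub>2 + \<delta>"
proof -
  let ?g = "next_op T d c f" and ?\<alpha> = "alpha_S (lo_S T d F) x\<^sub>1 x\<^sub>2"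
  have lo_unit: "\<forall>n\<in>lo_S T d F. unit_fun n" using unit_fun_lo_S[OF d F] .
  have "0 \<le> ?\<alpha>" using alpha_S_nonneg[OF lo_unit] .
  show ?thesis
  proof (cases "?g x\<^sub>1 - ?g x\<^sub>2 \<le> \<delta>")
    case True
    with \<open>0 \<le> ?\<alpha>\<close> \<open>0 < \<delta>\<close> show ?thesis by (simp add: tminus_def)
  next
    case False
    with \<open>0 < \<delta>\<close> have "0 < ?g x\<^sub>1 - ?g x\<^sub>2 - \<delta>" "?g x\<^sub>1 - ?g x\<^sub>2 - \<delta> < ?g x\<^sub>1 - ?g x\<^sub>2"
      by auto
    then obtain n where n: "n \<in> lo_S T d F" "?g x\<^sub>1 - ?g x\<^sub>2 - \<delta> \<le> n x\<^sub>1 - n x\<^sub>2"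
      using lo_S_separates_next_op[OF d T F f] by blast
    have "n x\<^sub>1 - n x\<^sub>2 \<le> ?\<alpha>"
      using alpha_S_upper[OF lo_unit n(1), of x\<^sub>1 x\<^sub>2] by (simp add: tminus_def)
    with n(2) \<open>0 \<le> ?\<alpha>\<close> \<open>0 < \<delta>\<close> show ?thesis
      unfolding tminus_def[of "?g x\<^sub>1"] by (intro max.boundedI) linarith+
  qed
qed

lemma next_op_c_S:
  assumes "label_metric d" "fin_branching T" "\<forall>f\<in>F. unit_fun f" "f \<in> c_S F"
  shows "next_op T d c f \<in> c_S (lo_S T d F)"
proof -
  have "unit_fun f" using assms(4) by (simp add: c_S_def gamma_S_def)
  moreover have "tminus (next_op T d c f x\<^sub>1) (next_op T d c f x\<^sub>2) \<le> alpha_S (lo_S T d F) x\<^sub>1 x\<^sub>2"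
    for x\<^sub>1 x\<^sub>2 using next_op_c_S_diff_le[OF assms] by (rule field_le_epsilon)
  ultimately show ?thesis
    using next_op_unit[OF assms(1)] by (simp add: c_S_def gamma_S_def)
qed

theorem mainTheorem14:
  fixes T :: "('x \<times> 'a \<times> 'x) set" and d :: "'a \<Rightarrow> 'a \<Rightarrow> real"
    and F :: "('x \<Rightarrow> real) set"
  assumes "label_metric d"
    and "fin_branching T"
    and "\<forall>f\<in>F. unit_fun f"
  shows "lo_S T d (c_S F) \<subseteq> c_S (lo_S T d F)"
proof
  fix g assume "g \<in> lo_S T d (c_S F)"
  then obtain c f where g: "g = next_op T d c f" and "f \<in> clos_meet_shift (c_S F)"
    unfolding lo_S_def by blast
  then have "f \<in> c_S F" using clos_meet_shift_c_S[OF assms(3)] by blast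
  then show "g \<in> c_S (lo_S T d F)" unfolding g by (rule next_op_c_S[OF assms])
qed

end
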